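(* Let $(X,d)$ be a complete metric space with $|X|\geqslant 3$ and let $T\colon X\to X$ be continuous and asymptotically regular. Suppose there exist $\alpha\in[0,\frac12)$ and functions $\beta_1,\beta_2,\beta_3\colon[0,\infty)\to[0,\infty)$ with $\limsup_{t\to0}\beta_i(t)<\infty$ for $i=1,2,3$, such that $$d(Tx,Ty)+d(Ty,Tz)+d(Tx,Tz)\leqslant \alpha\big(d(x,y)+d(y,z)+d(x,z)\big)+\beta_1(d(x,Tx))\,d(x,Tx)+\beta_2(d(y,Ty))\,d(y,Ty)+\beta_3(d(z,Tz))\,d(z,Tz)$$ for all pairwise distinct $x,y,z\in X$. Then $T$ has a fixed point, and $T$ has at most two fixed points.
   Context: A mapping $T\colon X\to X$ on a metric space is asymptotically regular if $\lim_{n\to\infty}d(T^{n+1}x,T^nx)=0$ for every $x\in X$. *)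

theory Defs
  imports "HOL-Analysis.Analysis"
begin

definition asymptotically_regular :: "('a::metric_space \<Rightarrow> 'a) \<Rightarrow> bool" where
  "asymptotically_regular T \<longleftrightarrow>
     (\<forall>x. (\<lambda>n. dist ((T ^^ Suc n) x) ((T ^^ n) x)) \<longlonglongrightarrow> 0)"

end

theory Submission
  imports Defs
begin

(*
  Every orbit of T is injective or eventually periodic, and a periodic point of an asymptotically
  regular map is fixed. Along an injective orbit (x_k), whose steps d_k = d(x_k, x_{k+1}) tend to 0,
  the inequality for the triangle (x_m, x_n, x_{m+1}), two triangle inequalities and alpha <= 1/2
  give d(x_m, x_n) <= 3 d_m + 2 d_n + e_m + e_n with e_k -> 0, since beta_i(t) t -> 0 as t -> 0+.
  Hence the orbit is Cauchy and, by continuity, its limit is fixed. Three distinct fixed points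
  would span a triangle of positive perimeter p with p <= alpha p.
*)

lemma tendsto_mult_at_right_0_if_Limsup_finite:
  fixes \<beta> :: "real \<Rightarrow> real"
  assumes "Limsup (at_right 0) (\<lambda>t. ereal (\<beta> t)) < \<infinity>"
    and "\<And>t. t > 0 \<Longrightarrow> 0 \<le> \<beta> t"
  shows "((\<lambda>t. \<beta> t * t) \<longlongrightarrow> 0) (at_right 0)"
proof -
  obtain B where "Limsup (at_right 0) (\<lambda>t. ereal (\<beta> t)) < ereal B"
    using ereal_dense2[OF assms(1)] by blast
  then have "\<forall>\<^sub>F t in at_right 0. \<beta> t < B"
    by (auto dest: Limsup_lessD)
  then have upper: "\<forall>\<^sub>F t in at_right 0. \<beta> t * t \<le> B * t"
    using eventually_at_right_less[of "0::real"]
    by eventually_elim (simp add: less_imp_le mult_right_mono)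
  have lower: "\<forall>\<^sub>F t in at_right 0. 0 \<le> \<beta> t * t"
    using eventually_at_right_less[of "0::real"]
    by eventually_elim (simp add: assms(2) less_imp_le)
  have "((\<lambda>t. B * t) \<longlongrightarrow> B * 0) (at_right 0)"
    by (intro tendsto_intros)
  then show ?thesis
    using tendsto_sandwich[OF lower upper tendsto_const] by simp
qed

lemma asymptotically_regular_periodic_point_fixed:
  assumes "asymptotically_regular T" and "(T ^^ p) x = x" and "p > 0"
  shows "T x = x"
proof -
  have "(\<lambda>k. dist ((T ^^ Suc k) x) ((T ^^ k) x)) \<longlonglongrightarrow> 0"
    using assms(1) by (simp add: asymptotically_regular_def)
  moreover have "strict_mono (\<lambda>j. j * p)"
    using assms(3) by (simp add: strict_mono_def)
  ultimately have "(\<lambda>j. dist ((T ^^ Suc (j * p)) x) ((T ^^ (j * p)) x)) \<longlonglongrightarrow> 0"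
    by (rule LIMSEQ_subseq_LIMSEQ[unfolded comp_def])
  moreover have "(T ^^ (j * p)) x = x" for j
    using assms(2) by (induction j) (simp_all add: funpow_add)
  ultimately have "(\<lambda>j. dist (T x) x) \<longlonglongrightarrow> 0"
    by simp
  then show ?thesis
    by (simp add: LIMSEQ_const_iff)
qed

lemma Cauchy_if_dist_le_add:
  fixes X :: "nat \<Rightarrow> 'a::metric_space"
  assumes "\<And>m n. dist (X m) (X n) \<le> g m + g n" and "g \<longlonglongrightarrow> 0"
  shows "Cauchy X"
proof (rule metric_CauchyI)
  fix e :: real
  assume "e > 0"
  then obtain M where M: "\<And>k. k \<ge> M \<Longrightarrow> g k < e / 2"
    using order_tendstoD(2)[OF assms(2), of "e / 2"] by (auto simp: eventually_sequentially)
  have "dist (X m) (X n) < e" if "m \<ge> M" "n \<ge> M" for m n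
    using assms(1)[of m n] M[OF that(1)] M[OF that(2)] by linarith
  then show "\<exists>M. \<forall>m\<ge>M. \<forall>n\<ge>M. dist (X m) (X n) < e"
    by blast
qed

lemma fixed_point_if_Cauchy_orbit:
  fixes T :: "'a::complete_space \<Rightarrow> 'a"
  assumes "continuous_on UNIV T" and "Cauchy (\<lambda>n. (T ^^ n) x)"
  shows "\<exists>y. T y = y"
proof -
  obtain y where y: "(\<lambda>n. (T ^^ n) x) \<longlonglongrightarrow> y"
    using assms(2) Cauchy_convergent_iff convergent_def by blast
  then have "(\<lambda>n. T ((T ^^ n) x)) \<longlonglongrightarrow> T y"
    using assms(1) by (intro isCont_tendsto_compose[OF _ y]) (simp add: continuous_on_eq_continuous_at)
  moreover have "(\<lambda>n. T ((T ^^ n) x)) \<longlonglongrightarrow> y"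
    using LIMSEQ_Suc[OF y] by simp
  ultimately have "T y = y"
    by (rule LIMSEQ_unique)
  then show ?thesis ..
qed

lemma dist_le_displacements_if_perimeter_estimate:
  fixes T :: "'a::metric_space \<Rightarrow> 'a"
  assumes "0 \<le> \<alpha>" and "\<alpha> \<le> 1/2"
    and perimeter: "dist (T x) (T y) + dist (T y) (T (T x)) + dist (T x) (T (T x))
      \<le> \<alpha> * (dist x y + dist y (T x) + dist x (T x)) + c"
  shows "dist x y \<le> 3 * dist x (T x) + 2 * dist y (T y) + c"
proof -
  have "dist y (T x) \<le> dist x y + dist x (T x)"
    using dist_triangle[where x=y and y=x and z="T x"] by (simp add: dist_commute)
  then have "\<alpha> * (dist x y + dist y (T x) + dist x (T x)) \<le> \<alpha> * (2 * dist x y + 2 * dist x (T x))"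
    using assms(1) by (intro mult_left_mono) auto
  also have "\<dots> \<le> 1/2 * (2 * dist x y + 2 * dist x (T x))"
    using assms(2) by (intro mult_right_mono) auto
  also have "\<dots> = dist x y + dist x (T x)"
    by simp
  finally have "dist (T x) (T y) + dist (T y) (T (T x)) + dist (T x) (T (T x))
      \<le> dist x y + dist x (T x) + c"
    using perimeter by linarith
  moreover have "dist x y \<le> dist x (T x) + dist (T x) (T y) + dist y (T y)"
    using dist_triangle[where x=x and y="T x" and z=y] dist_triangle[where x="T x" and y="T y" and z=y]
    by (simp add: dist_commute)
  moreover have "dist x y \<le> dist x (T x) + dist (T x) (T (T x)) + dist (T y) (T (T x)) + dist y (T y)"
    using dist_triangle[where x=x and y="T x" and z=y] dist_triangle[where x="T x" and y="T (T x)" and z=y]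
      dist_triangle[where x="T (T x)" and y="T y" and z=y]
    by (simp add: dist_commute)
  ultimately show ?thesis
    by linarith
qed

lemma finite_card_le_2_if_no_three_distinct:
  assumes "\<And>x y z. x \<in> S \<Longrightarrow> y \<in> S \<Longrightarrow> z \<in> S \<Longrightarrow> x = y \<or> y = z \<or> x = z"
  shows "finite S \<and> card S \<le> 2"
proof (rule ccontr)
  assume "\<not> (finite S \<and> card S \<le> 2)"
  then obtain B where "B \<subseteq> S" "card B = 3"
    by (metis infinite_arbitrarily_large obtain_subset_with_card_n not_less_eq_eq numeral_2_eq_2 numeral_3_eq_3)
  then show False
    using assms unfolding card_3_iff by blast
qed

locale generalized_perimeter_contraction =
  fixes T :: "'a::metric_space \<Rightarrow> 'a"
    and \<alpha> :: real
    and \<beta>1 \<beta>2 \<beta>3 :: "real \<Rightarrow> real"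
  assumes asreg: "asymptotically_regular T"
    and alpha: "0 \<le> \<alpha>" "\<alpha> \<le> 1/2"
    and beta_nonneg: "\<And>t. t \<ge> 0 \<Longrightarrow> \<beta>1 t \<ge> 0 \<and> \<beta>2 t \<ge> 0 \<and> \<beta>3 t \<ge> 0"
    and lsup1: "Limsup (at_right 0) (\<lambda>t. ereal (\<beta>1 t)) < \<infinity>"
    and lsup2: "Limsup (at_right 0) (\<lambda>t. ereal (\<beta>2 t)) < \<infinity>"
    and lsup3: "Limsup (at_right 0) (\<lambda>t. ereal (\<beta>3 t)) < \<infinity>"
    and ineq: "\<And>x y z. x \<noteq> y \<Longrightarrow> y \<noteq> z \<Longrightarrow> x \<noteq> z \<Longrightarrow>
      dist (T x) (T y) + dist (T y) (T z) + dist (T x) (T z)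
        \<le> \<alpha> * (dist x y + dist y z + dist x z)
          + \<beta>1 (dist x (T x)) * dist x (T x)
          + \<beta>2 (dist y (T y)) * dist y (T y)
          + \<beta>3 (dist z (T z)) * dist z (T z)"
begin

lemma dist_le_displacements:
  assumes "x \<noteq> y" "y \<noteq> T x" "x \<noteq> T x"
  shows "dist x y \<le> 3 * dist x (T x) + 2 * dist y (T y)
    + (\<beta>1 (dist x (T x)) * dist x (T x) + \<beta>2 (dist y (T y)) * dist y (T y)
      + \<beta>3 (dist (T x) (T (T x))) * dist (T x) (T (T x)))"
  using ineq[OF assms] by (intro dist_le_displacements_if_perimeter_estimate[OF alpha]) (simp add: add.assoc)

lemma fixed_points_finite_card_le_2: "finite {x. T x = x} \<and> card {x. T x = x} \<le> 2"
proof (rule finite_card_le_2_if_no_three_distinct, rule ccontr)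
  fix x y z
  assume "x \<in> {x. T x = x}" "y \<in> {x. T x = x}" "z \<in> {x. T x = x}"
    and "\<not> (x = y \<or> y = z \<or> x = z)"
  then have distinct: "x \<noteq> y" "y \<noteq> z" "x \<noteq> z" and fixed: "T x = x" "T y = y" "T z = z"
    by auto
  define p where "p = dist x y + dist y z + dist x z"
  have "p \<le> \<alpha> * p"
    using ineq[OF distinct] fixed by (simp add: p_def)
  moreover have "0 < p"
    using distinct by (simp add: p_def add_pos_nonneg)
  moreover have "\<alpha> * p \<le> 1/2 * p"
    using alpha \<open>0 < p\<close> by (intro mult_right_mono) auto
  ultimately show False
    by linarith
qed

lemma injective_orbit_Cauchy:
  assumes inj: "inj (\<lambda>n. (T ^^ n) x)"
  shows "Cauchy (\<lambda>n. (T ^^ n) x)"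
proof -
  define X where "X = (\<lambda>n. (T ^^ n) x)"
  define d where "d k = dist (X k) (T (X k))" for k
  define g where "g k = 3 * d k + \<beta>1 (d k) * d k + \<beta>2 (d k) * d k + \<beta>3 (d (Suc k)) * d (Suc k)" for k
  have X_Suc: "X (Suc k) = T (X k)" for k
    by (simp add: X_def)
  have d_pos: "d k > 0" for k
    using inj_eq[OF inj, of k "Suc k"] by (simp add: d_def X_def)
  have b_nonneg: "0 \<le> \<beta>1 (d k) * d k" "0 \<le> \<beta>2 (d k) * d k" "0 \<le> \<beta>3 (d k) * d k" for k
    using beta_nonneg[of "d k"] d_pos[of k] by auto
  have g_ge: "d k \<le> g k" "0 \<le> g k" for k
    using b_nonneg[of k] b_nonneg[of "Suc k"] d_pos[of k] unfolding g_def by linarith+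
  have "d \<longlonglongrightarrow> 0"
    using asreg by (simp add: asymptotically_regular_def d_def[abs_def] X_def dist_commute)
  then have d_at_right: "filterlim d (at_right 0) sequentially"
    using d_pos by (intro tendsto_imp_filterlim_at_right always_eventually) auto
  have "(\<lambda>k. \<beta> (d k) * d k) \<longlonglongrightarrow> 0"
    if "Limsup (at_right 0) (\<lambda>t. ereal (\<beta> t)) < \<infinity>" "\<And>t. t > 0 \<Longrightarrow> 0 \<le> \<beta> t" for \<beta>
    using tendsto_mult_at_right_0_if_Limsup_finite[OF that] d_at_right by (rule filterlim_compose)
  then have "(\<lambda>k. \<beta>1 (d k) * d k) \<longlonglongrightarrow> 0" "(\<lambda>k. \<beta>2 (d k) * d k) \<longlonglongrightarrow> 0"
    "(\<lambda>k. \<beta>3 (d k) * d k) \<longlonglongrightarrow> 0"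
    using lsup1 lsup2 lsup3 beta_nonneg by (simp_all add: less_imp_le)
  then have "g \<longlonglongrightarrow> 3 * 0 + 0 + 0 + 0"
    unfolding g_def using \<open>d \<longlonglongrightarrow> 0\<close>
    by (intro tendsto_add tendsto_mult_left LIMSEQ_Suc[of "\<lambda>k. \<beta>3 (d k) * d k"])
  then have "g \<longlonglongrightarrow> 0"
    by simp
  moreover have "dist (X m) (X n) \<le> g m + g n" for m n
  proof -
    consider "n = m" | "n = Suc m" | "n \<noteq> m" "n \<noteq> Suc m"
      by blast
    then show ?thesis
    proof cases
      case 1
      then show ?thesis using g_ge by simp
    next
      case 2
      then show ?thesis using g_ge[of m] g_ge[of n] by (simp add: d_def X_Suc)
    next
      case 3
      then have "X m \<noteq> X n" "X n \<noteq> T (X m)" "X m \<noteq> T (X m)"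
        using inj_eq[OF inj, of m n] inj_eq[OF inj, of n "Suc m"] inj_eq[OF inj, of m "Suc m"]
        by (simp_all add: X_def)
      then have "dist (X m) (X n) \<le> 3 * d m + 2 * d n
          + (\<beta>1 (d m) * d m + \<beta>2 (d n) * d n + \<beta>3 (d (Suc m)) * d (Suc m))"
        unfolding d_def X_Suc by (rule dist_le_displacements)
      then show ?thesis
        using b_nonneg[of n] b_nonneg[of m] b_nonneg[of "Suc n"] d_pos[of n]
        unfolding g_def by linarith
    qed
  qed
  ultimately have "Cauchy X"
    by (intro Cauchy_if_dist_le_add)
  then show ?thesis
    unfolding X_def .
qed

end

theorem corollary4p7:
  fixes T :: "'a::complete_space \<Rightarrow> 'a"
    and \<alpha> :: real
    and \<beta>1 \<beta>2 \<beta>3 :: "real \<Rightarrow> real"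
  assumes three: "\<exists>a b c :: 'a. a \<noteq> b \<and> b \<noteq> c \<and> a \<noteq> c"
    and cont: "continuous_on UNIV T"
    and asreg: "asymptotically_regular T"
    and alpha: "0 \<le> \<alpha>" "\<alpha> < 1/2"
    and beta_nonneg: "\<And>t. t \<ge> 0 \<Longrightarrow> \<beta>1 t \<ge> 0 \<and> \<beta>2 t \<ge> 0 \<and> \<beta>3 t \<ge> 0"
    and lsup1: "Limsup (at_right 0) (\<lambda>t. ereal (\<beta>1 t)) < \<infinity>"
    and lsup2: "Limsup (at_right 0) (\<lambda>t. ereal (\<beta>2 t)) < \<infinity>"
    and lsup3: "Limsup (at_right 0) (\<lambda>t. ereal (\<beta>3 t)) < \<infinity>"
    and ineq: "\<And>x y z. x \<noteq> y \<Longrightarrow> y \<noteq> z \<Longrightarrow> x \<noteq> z \<Longrightarrow>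
      dist (T x) (T y) + dist (T y) (T z) + dist (T x) (T z)
        \<le> \<alpha> * (dist x y + dist y z + dist x z)
          + \<beta>1 (dist x (T x)) * dist x (T x)
          + \<beta>2 (dist y (T y)) * dist y (T y)
          + \<beta>3 (dist z (T z)) * dist z (T z)"
  shows "(\<exists>x. T x = x) \<and> finite {x. T x = x} \<and> card {x. T x = x} \<le> 2"
proof -
  interpret generalized_perimeter_contraction T \<alpha> \<beta>1 \<beta>2 \<beta>3
    by unfold_locales (fact asreg alpha(1) beta_nonneg lsup1 lsup2 lsup3 ineq | use alpha(2) in simp)+
  fix x :: 'a
  consider (injective) "inj (\<lambda>n. (T ^^ n) x)"
    | (periodic) n m where "n < m" "(T ^^ m) x = (T ^^ n) x"
    by (metis injI linorder_neqE_nat)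
  then have "\<exists>y. T y = y"
  proof cases
    case injective
    then show ?thesis
      using cont injective_orbit_Cauchy fixed_point_if_Cauchy_orbit by blast
  next
    case periodic
    have "(T ^^ (m - n)) ((T ^^ n) x) = (T ^^ (m - n + n)) x"
      by (simp add: funpow_add)
    also have "\<dots> = (T ^^ n) x"
      using periodic by simp
    finally show ?thesis
      using asymptotically_regular_periodic_point_fixed[OF asreg] periodic(1) by force
  qed
  then show ?thesis
    using fixed_points_finite_card_le_2 by blast
qed

end
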